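(* Let $(X,Y,Z)$ be jointly distributed with $X\in\mathcal X$, $Y\in\mathcal Y$ (a finite set of classes, indexed so that "smallest index" is meaningful) and $Z\in\{0,1\}^K$, with $\Pr(Z_k=1)>0$ for all $k\in[K]$. Let $\mathbb P_X$ be the marginal of $X$. Let $r:\mathcal X\times\mathcal Y\to[0,\infty)$ be a pointwise risk, and let $g(x,k)=\Pr(Z_k=1\mid X=x)$. Let $\mathcal C=\{(y_1,\mathcal I_1),\dots,(y_C,\mathcal I_C)\}$ be fairness constraints and $\alpha\in[0,1]$. Assume the uniqueness assumption holds for $(r,g)$ under $\mathbb P_X$. Let $\{\psi_{c,k}:c\in[C],k\in\mathcal I_c\}$ be (the $\psi$-part of) a maximizer of the Dual LP$(r,g,\mathbb P_X,\mathcal C,\alpha)$. Then the classifier $$h(x)=\operatorname*{argmin}_{y\in\mathcal Y}\Big(r(x,y)+\sum_{k\in[K]}g(x,k)w(y,k)\Big),\qquad w(y,k)=-\sum_{c\in[C]}\mathbf 1[y_c=y,\,k\in\mathcal I_c]\frac{\psi_{c,k}}{\Pr(Z_k=1)},$$ (ties broken to the minimizing class with the smallest index) is a minimizer of $$\min_{h:\mathcal X\to\mathcal Y}\mathbb E[r(X,h(X))]\quad\text{subject to } h \text{ satisfying } \alpha\text{-group fairness w.r.t. } \mathcal C,$$ where the minimum is over (possibly randomized) classifiers.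
   Context: Fairness constraints: $\mathcal C=\{(y_c,\mathcal I_c)\}_{c\in[C]}$ with $y_c\in\mathcal Y$ and $\mathcal I_c\subseteq[K]$. A (randomized) classifier $h:\mathcal X\to\mathcal Y$ satisfies $\alpha$-group fairness w.r.t. $\mathcal C$ if $\max_{k,k'\in\mathcal I_c}|\Pr(h(X)=y_c\mid Z_k=1)-\Pr(h(X)=y_c\mid Z_{k'}=1)|\le\alpha$ for all $c\in[C]$ (the randomness of $h$ given $X$ is independent of $(Y,Z)$). Dual LP$(r,g,P,\mathcal C,\alpha)$ for a distribution $P$ on $\mathcal X$: maximize over $\phi:\mathcal X\to\mathbb R$ and reals $\psi=\{\psi_{c,k}:c\in[C],k\in\mathcal I_c\}$ the objective $\mathbb E_{X\sim P}[\phi(X)]-\frac\alpha2\sum_{c\in[C]}\sum_{k\in\mathcal I_c}|\psi_{c,k}|$ subject to $\phi(x)+\sum_{c:y_c=y}\sum_{k\in\mathcal I_c}g(x,k)\frac{\psi_{c,k}}{\mathbb E_{X\sim P}[g(X,k)]}\le r(x,y)$ for all $x\in\mathcal X,y\in\mathcal Y$, and $\sum_{k\in\mathcal I_c}\psi_{c,k}=0$ for all $c$. (For the Bayes $g$ and $P=\mathbb P_X$, $\mathbb E_P[g(X,k)]=\Pr(Z_k=1)$.) Uniqueness assumption for $(r,g)$ under $P$: for every $w:\mathcal Y\times[K]\to\mathbb R$, the set $\operatorname{argmin}_{y\in\mathcal Y}\big(r(X,y)-\sum_k g(X,k)w(y,k)\big)$ has exactly one element for $P$-almost every $X$. *)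

theory Defs
  imports "HOL-Probability.Probability"
begin

text \<open>Classes form a finite linearly ordered type 'y; the index set [K] is {..<K};
  constraints are indexed by c < C with class yc c and group index set Ic c.
  Z :: 'a => nat => bool, Z w k means Z_k = 1.\<close>

definition cond_prob_version ::
  "'a measure \<Rightarrow> 'x measure \<Rightarrow> ('a \<Rightarrow> 'x) \<Rightarrow> ('a \<Rightarrow> nat \<Rightarrow> bool) \<Rightarrow> nat
   \<Rightarrow> ('x \<Rightarrow> nat \<Rightarrow> real) \<Rightarrow> bool" where
  "cond_prob_version M N X Z K g \<longleftrightarrow>
     (\<forall>k<K. (\<lambda>x. g x k) \<in> borel_measurable N \<and>
        integrable (distr M N X) (\<lambda>x. g x k) \<and>
        (\<forall>A\<in>sets N. (\<integral>x. indicator A x * g x k \<partial>distr M N X)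
                       = measure M {\<omega>\<in>space M. X \<omega> \<in> A \<and> Z \<omega> k}))"

text \<open>A randomized classifier: x maps to a distribution over classes, measurably in x.
  A deterministic classifier h corresponds to (\<lambda>x. return_pmf (h x)).\<close>
definition randomized_classifier :: "'x measure \<Rightarrow> ('x \<Rightarrow> 'y pmf) \<Rightarrow> bool" where
  "randomized_classifier N H \<longleftrightarrow> (\<forall>y. (\<lambda>x. pmf (H x) y) \<in> borel_measurable N)"

text \<open>Pr(h(X) = y | Z_k = 1), the randomness of h given X being independent of (Y,Z).\<close>
definition cond_pred_prob ::
  "'a measure \<Rightarrow> ('a \<Rightarrow> 'x) \<Rightarrow> ('a \<Rightarrow> nat \<Rightarrow> bool) \<Rightarrow> ('x \<Rightarrow> 'y pmf) \<Rightarrow> 'y \<Rightarrow> nat \<Rightarrow> real" where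
  "cond_pred_prob M X Z H y k =
     (\<integral>\<omega>. pmf (H (X \<omega>)) y * indicator {\<omega>\<in>space M. Z \<omega> k} \<omega> \<partial>M)
       / measure M {\<omega>\<in>space M. Z \<omega> k}"

definition group_fair ::
  "'a measure \<Rightarrow> ('a \<Rightarrow> 'x) \<Rightarrow> ('a \<Rightarrow> nat \<Rightarrow> bool) \<Rightarrow> nat \<Rightarrow> (nat \<Rightarrow> 'y) \<Rightarrow> (nat \<Rightarrow> nat set)
   \<Rightarrow> real \<Rightarrow> ('x \<Rightarrow> 'y pmf) \<Rightarrow> bool" where
  "group_fair M X Z C yc Ic \<alpha> H \<longleftrightarrow>
     (\<forall>c<C. \<forall>k\<in>Ic c. \<forall>k'\<in>Ic c.
        \<bar>cond_pred_prob M X Z H (yc c) k - cond_pred_prob M X Z H (yc c) k'\<bar> \<le> \<alpha>)"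

definition risk :: "'x measure \<Rightarrow> ('x \<Rightarrow> 'y::finite \<Rightarrow> real) \<Rightarrow> ('x \<Rightarrow> 'y pmf) \<Rightarrow> ennreal" where
  "risk P r H = (\<integral>\<^sup>+x. ennreal (\<Sum>y\<in>UNIV. pmf (H x) y * r x y) \<partial>P)"

definition dual_feasible ::
  "'x measure \<Rightarrow> ('x \<Rightarrow> 'y \<Rightarrow> real) \<Rightarrow> ('x \<Rightarrow> nat \<Rightarrow> real) \<Rightarrow> nat \<Rightarrow> (nat \<Rightarrow> 'y)
   \<Rightarrow> (nat \<Rightarrow> nat set) \<Rightarrow> ('x \<Rightarrow> real) \<Rightarrow> (nat \<Rightarrow> nat \<Rightarrow> real) \<Rightarrow> bool" where
  "dual_feasible P r g C yc Ic \<phi> \<psi> \<longleftrightarrow>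
     \<phi> \<in> borel_measurable P \<and> integrable P \<phi> \<and>
     (\<forall>x\<in>space P. \<forall>y.
        \<phi> x + (\<Sum>c\<in>{c. c < C \<and> yc c = y}. \<Sum>k\<in>Ic c.
                  g x k * \<psi> c k / (\<integral>x'. g x' k \<partial>P)) \<le> r x y) \<and>
     (\<forall>c<C. (\<Sum>k\<in>Ic c. \<psi> c k) = 0)"

definition dual_objective ::
  "'x measure \<Rightarrow> real \<Rightarrow> nat \<Rightarrow> (nat \<Rightarrow> nat set) \<Rightarrow> ('x \<Rightarrow> real) \<Rightarrow> (nat \<Rightarrow> nat \<Rightarrow> real) \<Rightarrow> real" where
  "dual_objective P \<alpha> C Ic \<phi> \<psi> =
     (\<integral>x. \<phi> x \<partial>P) - \<alpha> / 2 * (\<Sum>c<C. \<Sum>k\<in>Ic c. \<bar>\<psi> c k\<bar>)"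

definition dual_maximizer ::
  "'x measure \<Rightarrow> ('x \<Rightarrow> 'y \<Rightarrow> real) \<Rightarrow> ('x \<Rightarrow> nat \<Rightarrow> real) \<Rightarrow> nat \<Rightarrow> (nat \<Rightarrow> 'y)
   \<Rightarrow> (nat \<Rightarrow> nat set) \<Rightarrow> real \<Rightarrow> ('x \<Rightarrow> real) \<Rightarrow> (nat \<Rightarrow> nat \<Rightarrow> real) \<Rightarrow> bool" where
  "dual_maximizer P r g C yc Ic \<alpha> \<phi> \<psi> \<longleftrightarrow>
     dual_feasible P r g C yc Ic \<phi> \<psi> \<and>
     (\<forall>\<phi>' \<psi>'. dual_feasible P r g C yc Ic \<phi>' \<psi>' \<longrightarrow>
        dual_objective P \<alpha> C Ic \<phi>' \<psi>' \<le> dual_objective P \<alpha> C Ic \<phi> \<psi>)"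

definition uniqueness_assumption ::
  "'x measure \<Rightarrow> ('x \<Rightarrow> 'y \<Rightarrow> real) \<Rightarrow> ('x \<Rightarrow> nat \<Rightarrow> real) \<Rightarrow> nat \<Rightarrow> bool" where
  "uniqueness_assumption P r g K \<longleftrightarrow>
     (\<forall>w :: 'y \<Rightarrow> nat \<Rightarrow> real. AE x in P.
        card {y. \<forall>y'. r x y - (\<Sum>k<K. g x k * w y k) \<le> r x y' - (\<Sum>k<K. g x k * w y' k)} = 1)"

definition fair_weights ::
  "'a measure \<Rightarrow> ('a \<Rightarrow> nat \<Rightarrow> bool) \<Rightarrow> nat \<Rightarrow> (nat \<Rightarrow> 'y) \<Rightarrow> (nat \<Rightarrow> nat set)
   \<Rightarrow> (nat \<Rightarrow> nat \<Rightarrow> real) \<Rightarrow> 'y \<Rightarrow> nat \<Rightarrow> real" where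
  "fair_weights M Z C yc Ic \<psi> y k =
     - (\<Sum>c<C. if yc c = y \<and> k \<in> Ic c
               then \<psi> c k / measure M {\<omega>\<in>space M. Z \<omega> k} else 0)"

definition plugin_classifier ::
  "('x \<Rightarrow> 'y::linorder \<Rightarrow> real) \<Rightarrow> ('x \<Rightarrow> nat \<Rightarrow> real) \<Rightarrow> nat \<Rightarrow> ('y \<Rightarrow> nat \<Rightarrow> real) \<Rightarrow> 'x \<Rightarrow> 'y" where
  "plugin_classifier r g K w x =
     (LEAST y. \<forall>y'. r x y + (\<Sum>k<K. g x k * w y k) \<le> r x y' + (\<Sum>k<K. g x k * w y' k))"

end

theory Submission
  imports Defs
begin

text \<open>
  Weak duality: for a dual feasible pair \<open>(\<phi>, \<psi>)\<close> the constraint says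
  \<open>\<phi> x \<le> r x y - dual_shift \<psi> x y\<close> for every class \<open>y\<close>, where
  \<open>dual_shift \<psi> x y = \<Sum>\<^bsub>c: y\<^sub>c = y\<^esub> \<Sum>\<^bsub>k \<in> I\<^sub>c\<^esub> g x k \<psi>\<^bsub>c,k\<^esub> / Pr(Z\<^sub>k = 1)\<close>.
  Averaged over a randomized classifier \<open>H\<close>, the shift becomes
  \<open>\<Sum>\<^bsub>c,k\<^esub> \<psi>\<^bsub>c,k\<^esub> Pr(H(X) = y\<^sub>c | Z\<^sub>k = 1)\<close>, which is at least \<open>-\<alpha>/2 \<Sum>\<^bsub>c,k\<^esub> |\<psi>\<^bsub>c,k\<^esub>|\<close>
  when \<open>H\<close> is \<open>\<alpha>\<close>-fair, because every row of \<open>\<psi>\<close> sums to 0. So the dual value bounds the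
  risk of every fair classifier from below.

  For the plug-in classifier \<open>h\<close>, which minimizes \<open>r x y - dual_shift \<psi> x y\<close>, the bound is
  attained. Optimality of \<open>(\<phi>, \<psi>)\<close> forces \<open>\<phi>\<close> to be this minimum almost everywhere.
  Replacing \<open>\<psi>\<close> by \<open>\<psi> + t D\<close>, and \<open>\<phi>\<close> by the corresponding new minimum, keeps the pair
  feasible, so the one-sided derivative of the dual objective in any direction \<open>D\<close> with zero
  row sums is at most 0. Under the uniqueness assumption the minimizer does not move for small
  \<open>t\<close>, so by dominated convergence this derivative is \<open>-E[dual_shift D X (h X)]\<close> minus \<open>\<alpha>/2\<close>
  times the derivative of the penalty. The direction \<open>e\<^bsub>c,k'\<^esub> - e\<^bsub>c,k\<^esub>\<close> yields the fairness
  of \<open>h\<close>, and the direction \<open>-\<psi>\<close> yields complementary slackness, that is, the risk of \<open>h\<close>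
  is at most the dual value.
\<close>

lemma cond_prob_version_nonneg:
  assumes X[measurable]: "X \<in> measurable M N"
    and g: "cond_prob_version M N X Z K g" and k: "k < K"
  shows "AE x in distr M N X. 0 \<le> g x k"
proof -
  let ?P = "distr M N X"
  have [measurable]: "(\<lambda>x. g x k) \<in> borel_measurable N"
    and g_int: "integrable ?P (\<lambda>x. g x k)"
    and g_cond: "\<And>A. A \<in> sets N \<Longrightarrow>
      (\<integral>x. indicator A x * g x k \<partial>?P) = measure M {\<omega>\<in>space M. X \<omega> \<in> A \<and> Z \<omega> k}"
    using g k unfolding cond_prob_version_def by auto
  define A where "A = {x\<in>space N. g x k < 0}"
  have A[measurable]: "A \<in> sets N" unfolding A_def by measurable
  have int_A: "integrable ?P (\<lambda>x. - (indicator A x * g x k))"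
    using integrable_mult_indicator[OF _ g_int, of A] by simp
  have "(\<integral>x. - (indicator A x * g x k) \<partial>?P) \<le> 0"
    using g_cond[OF A] by simp
  moreover have nonneg: "AE x in ?P. 0 \<le> - (indicator A x * g x k)"
    by (intro AE_I2) (auto simp: indicator_def A_def)
  ultimately have "AE x in ?P. - (indicator A x * g x k) = 0"
    using integral_nonneg_eq_0_iff_AE[OF int_A] integral_nonneg_AE[OF nonneg] by simp
  with AE_space[of ?P] show ?thesis
    by eventually_elim (auto simp: indicator_def A_def split: if_splits)
qed

lemma density_cond_prob_version:
  assumes M: "prob_space M" and X[measurable]: "X \<in> measurable M N"
    and Z_ev[measurable]: "{\<omega>\<in>space M. Z \<omega> k} \<in> sets M"
    and g: "cond_prob_version M N X Z K g" and k: "k < K"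
  shows "density (distr M N X) (\<lambda>x. g x k)
       = distr (density M (indicator {\<omega>\<in>space M. Z \<omega> k})) N X"
proof (rule measure_eqI)
  interpret M: prob_space M by (rule M)
  let ?P = "distr M N X" and ?S = "{\<omega>\<in>space M. Z \<omega> k}"
  have [measurable]: "(\<lambda>x. g x k) \<in> borel_measurable N"
    and g_int: "integrable ?P (\<lambda>x. g x k)"
    and g_cond: "\<And>A. A \<in> sets N \<Longrightarrow>
      (\<integral>x. indicator A x * g x k \<partial>?P) = measure M {\<omega>\<in>space M. X \<omega> \<in> A \<and> Z \<omega> k}"
    using g k unfolding cond_prob_version_def by auto
  fix A assume "A \<in> sets (density ?P (\<lambda>x. g x k))"
  then have A[measurable]: "A \<in> sets N" by simp
  have "emeasure (density ?P (\<lambda>x. g x k)) A = (\<integral>\<^sup>+x. ennreal (indicator A x * g x k) \<partial>?P)"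
    by (auto simp: emeasure_density intro!: nn_integral_cong split: split_indicator)
  also have "\<dots> = ennreal (\<integral>x. indicator A x * g x k \<partial>?P)"
    using cond_prob_version_nonneg[OF X g k] integrable_mult_indicator[OF _ g_int, of A]
    by (intro nn_integral_eq_integral) (auto simp: indicator_def)
  also have "\<dots> = emeasure M (?S \<inter> (X -` A \<inter> space M))"
  proof -
    have "{\<omega>\<in>space M. X \<omega> \<in> A \<and> Z \<omega> k} = ?S \<inter> (X -` A \<inter> space M)" by auto
    then show ?thesis using g_cond[OF A] by (simp add: M.emeasure_eq_measure)
  qed
  also have "\<dots> = emeasure (distr (density M (indicator ?S)) N X) A"
    by (simp add: emeasure_distr emeasure_restricted)
  finally show "emeasure (density ?P (\<lambda>x. g x k)) A
      = emeasure (distr (density M (indicator ?S)) N X) A" .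
qed simp

lemma integral_mult_cond_prob_version:
  assumes M: "prob_space M" and X[measurable]: "X \<in> measurable M N"
    and Z_ev[measurable]: "{\<omega>\<in>space M. Z \<omega> k} \<in> sets M"
    and g: "cond_prob_version M N X Z K g" and k: "k < K"
    and f[measurable]: "f \<in> borel_measurable N"
  shows "(\<integral>x. f x * g x k \<partial>distr M N X) = (\<integral>\<omega>. f (X \<omega>) * indicator {\<omega>\<in>space M. Z \<omega> k} \<omega> \<partial>M)"
proof -
  let ?S = "{\<omega>\<in>space M. Z \<omega> k}"
  have [measurable]: "(\<lambda>x. g x k) \<in> borel_measurable N"
    using g k unfolding cond_prob_version_def by auto
  have "(\<integral>x. f x * g x k \<partial>distr M N X) = (\<integral>x. g x k *\<^sub>R f x \<partial>distr M N X)"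
    by (simp add: mult.commute)
  also have "\<dots> = integral\<^sup>L (density (distr M N X) (\<lambda>x. g x k)) f"
    using cond_prob_version_nonneg[OF X g k] by (intro integral_density[symmetric]) auto
  also have "\<dots> = integral\<^sup>L (density M (indicator ?S)) (\<lambda>\<omega>. f (X \<omega>))"
    unfolding density_cond_prob_version[OF M X Z_ev g k] by (intro integral_distr) auto
  also have "\<dots> = (\<integral>\<omega>. indicator ?S \<omega> *\<^sub>R f (X \<omega>) \<partial>M)"
    by (subst integral_density[symmetric]) (auto simp: ennreal_indicator)
  finally show ?thesis by (simp add: mult.commute)
qed

lemma ennreal_integral_le_nn_integral:
  fixes f :: "'a \<Rightarrow> real"
  assumes "integrable M f"
  shows "ennreal (\<integral>x. f x \<partial>M) \<le> (\<integral>\<^sup>+x. ennreal (f x) \<partial>M)"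
proof -
  have "ennreal (\<integral>x. f x \<partial>M) \<le> ennreal (\<integral>x. max 0 (f x) \<partial>M)"
    using assms by (intro ennreal_leI integral_mono) auto
  also have "\<dots> = (\<integral>\<^sup>+x. ennreal (max 0 (f x)) \<partial>M)"
    using assms by (intro nn_integral_eq_integral[symmetric]) auto
  also have "\<dots> = (\<integral>\<^sup>+x. ennreal (f x) \<partial>M)"
    by (intro nn_integral_cong) (auto simp: max_def ennreal_neg)
  finally show ?thesis .
qed

lemma zero_sum_weights_lower_bound:
  fixes a q :: "'i \<Rightarrow> real"
  assumes I: "finite I" and a: "(\<Sum>i\<in>I. a i) = 0"
    and q: "\<And>i j. i \<in> I \<Longrightarrow> j \<in> I \<Longrightarrow> \<bar>q i - q j\<bar> \<le> e"
  shows "- (e / 2 * (\<Sum>i\<in>I. \<bar>a i\<bar>)) \<le> (\<Sum>i\<in>I. a i * q i)"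
proof (cases "I = {}")
  case False
  define m where "m = (Max (q ` I) + Min (q ` I)) / 2"
  have "Max (q ` I) \<in> q ` I" "Min (q ` I) \<in> q ` I"
    using I False by simp_all
  then obtain i1 i2 where i1: "i1 \<in> I" "q i1 = Max (q ` I)" and i2: "i2 \<in> I" "q i2 = Min (q ` I)"
    by (metis imageE)
  have "\<bar>q i - m\<bar> \<le> e / 2" if "i \<in> I" for i
    using that I q[OF i1(1) i2(1)] Max_ge[of "q ` I" "q i"] Min_le[of "q ` I" "q i"]
    unfolding m_def i1(2)[symmetric] i2(2)[symmetric] by (auto simp: abs_le_iff field_simps)
  then have bound: "\<bar>a i * (q i - m)\<bar> \<le> e / 2 * \<bar>a i\<bar>" if "i \<in> I" for i
    using that unfolding abs_mult mult.commute[of "e / 2"] by (intro mult_left_mono) auto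
  have "- (e / 2 * \<bar>a i\<bar>) \<le> a i * (q i - m)" if "i \<in> I" for i
    using abs_le_D2[OF bound[OF that]] by linarith
  then have "- (e / 2 * (\<Sum>i\<in>I. \<bar>a i\<bar>)) \<le> (\<Sum>i\<in>I. a i * (q i - m))"
    using sum_mono[of I "\<lambda>i. - (e / 2 * \<bar>a i\<bar>)"] by (simp add: sum_negf sum_distrib_left)
  also have "\<dots> = (\<Sum>i\<in>I. a i * q i) - m * (\<Sum>i\<in>I. a i)"
    by (simp add: algebra_simps sum_subtractf sum_distrib_left)
  finally show ?thesis using a by simp
qed simp

lemma abs_Min_range_diff_le:
  fixes f g :: "'y::finite \<Rightarrow> real"
  shows "\<bar>Min (range f) - Min (range g)\<bar> \<le> (\<Sum>y\<in>UNIV. \<bar>f y - g y\<bar>)"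
proof -
  have diff_le: "\<bar>f y - g y\<bar> \<le> (\<Sum>y\<in>UNIV. \<bar>f y - g y\<bar>)" for y
    by (intro member_le_sum) simp_all
  obtain a b where a: "f a = Min (range f)" and b: "g b = Min (range g)"
    using Min_in[of "range f"] Min_in[of "range g"]
    by (metis UNIV_not_empty empty_is_image finite finite_imageI imageE)
  have "Min (range f) \<le> f b" "Min (range g) \<le> g a" by simp_all
  with a b diff_le[of a] diff_le[of b] show ?thesis
    unfolding abs_le_iff by (intro conjI; linarith)
qed

lemma Min_range_perturb_eventually:
  fixes V L :: "'y::finite \<Rightarrow> real" and t :: "'i \<Rightarrow> real"
  assumes a: "\<And>y. y \<noteq> a \<Longrightarrow> V a < V y" and t: "(t \<longlongrightarrow> 0) F"
  shows "eventually (\<lambda>i. Min (range (\<lambda>y. V y - t i * L y)) = V a - t i * L a) F"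
proof -
  have "eventually (\<lambda>i. t i * (L y - L a) < V y - V a) F" if "y \<noteq> a" for y
  proof (rule order_tendstoD(2))
    show "((\<lambda>i. t i * (L y - L a)) \<longlongrightarrow> 0) F"
      using tendsto_mult_left_zero[OF t] by simp
    show "0 < V y - V a" using a[OF that] by simp
  qed
  then have "eventually (\<lambda>i. \<forall>y. y \<noteq> a \<longrightarrow> t i * (L y - L a) < V y - V a) F"
    by (intro eventually_all_finite) (simp add: eventually_mono)
  then show ?thesis
  proof eventually_elim
    case (elim i)
    show ?case
    proof (rule Min_eqI)
      fix m assume "m \<in> range (\<lambda>y. V y - t i * L y)"
      then obtain y where "m = V y - t i * L y" by blast
      then show "V a - t i * L a \<le> m"
        using elim[rule_format, of y] by (cases "y = a") (simp_all add: algebra_simps)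
    qed simp_all
  qed
qed

lemma
  fixes P :: "'y::{finite,linorder} \<Rightarrow> bool"
  assumes "P a"
  shows LeastI_finite: "P (LEAST y. P y)" and Least_le_finite: "(LEAST y. P y) \<le> a"
proof -
  have "(LEAST y. P y) = Min {y. P y}" using assms by (intro Least_Min) auto
  then show "P (LEAST y. P y)" "(LEAST y. P y) \<le> a"
    using assms Min_in[of "{y. P y}"] by auto
qed

lemma ex_minimizer_finite:
  fixes f :: "'y::finite \<Rightarrow> 'b::linorder"
  shows "\<exists>y. \<forall>y'. f y \<le> f y'"
proof -
  obtain y where "f y = Min (range f)"
    using Min_in[of "range f"] by (metis finite imageE UNIV_not_empty finite_imageI image_is_empty)
  then show ?thesis by (intro exI[of _ y]) simp
qed

lemma Least_minimizer_le:
  fixes f :: "'y::{finite,linorder} \<Rightarrow> 'b::linorder"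
  shows "f (LEAST y. \<forall>y'. f y \<le> f y') \<le> f z"
  using ex_minimizer_finite[of f] LeastI_finite[of "\<lambda>y. \<forall>y'. f y \<le> f y'"] by blast

lemma Least_minimizer_less:
  fixes f :: "'y::{finite,linorder} \<Rightarrow> 'b::linorder"
  assumes unique: "card {y. \<forall>y'. f y \<le> f y'} = 1" and y: "y \<noteq> (LEAST y. \<forall>y'. f y \<le> f y')"
  shows "f (LEAST y. \<forall>y'. f y \<le> f y') < f y"
proof -
  let ?a = "LEAST y. \<forall>y'. f y \<le> f y'"
  have "?a \<in> {y. \<forall>y'. f y \<le> f y'}" using Least_minimizer_le by blast
  with unique have "{y. \<forall>y'. f y \<le> f y'} = {?a}" by (metis card_1_singletonE singletonD)
  with y have "y \<notin> {y. \<forall>y'. f y \<le> f y'}" by blast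
  then obtain y' where "f y' < f y" by (auto simp: not_le)
  then show ?thesis using Least_minimizer_le[of f y'] by simp
qed

lemma measurable_Least_finite:
  fixes P :: "'y::{finite,linorder} \<Rightarrow> 'x \<Rightarrow> bool"
  assumes [measurable]: "\<And>y. Measurable.pred N (P y)"
  shows "(\<lambda>x. LEAST y. P y x) \<in> measurable N (count_space UNIV)"
  unfolding measurable_count_space_eq2_countable
proof safe
  fix a :: 'y
  have Least_eq: "(LEAST y. P y x) = a \<longleftrightarrow>
      (P a x \<and> (\<forall>b<a. \<not> P b x)) \<or> ((\<forall>y. \<not> P y x) \<and> (LEAST y::'y. False) = a)" for x
  proof (cases "\<exists>y. P y x")
    case True
    then show ?thesis
      using LeastI_finite[of "\<lambda>y. P y x"] Least_le_finite[of "\<lambda>y. P y x"]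
      by (metis leD order.antisym not_le)
  qed simp
  have "(\<lambda>x. LEAST y. P y x) -` {a} \<inter> space N
      = {x\<in>space N. (P a x \<and> (\<forall>b<a. \<not> P b x)) \<or> ((\<forall>y. \<not> P y x) \<and> (LEAST y::'y. False) = a)}"
    unfolding Least_eq[symmetric] by auto
  also have "\<dots> \<in> sets N" by measurable
  finally show "(\<lambda>x. LEAST y. P y x) -` {a} \<inter> space N \<in> sets N" .
qed simp

lemma sum_pmf_return_mult:
  fixes F :: "'y::finite \<Rightarrow> real"
  shows "(\<Sum>y\<in>UNIV. pmf (return_pmf a) y * F y) = F a"
  by (simp add: indicator_def if_distrib sum.delta')

lemma sum_mult_sum_fibre:
  fixes u :: "'y::finite \<Rightarrow> real" and yc :: "nat \<Rightarrow> 'y"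
  shows "(\<Sum>y\<in>UNIV. u y * (\<Sum>c\<in>{c. c < C \<and> yc c = y}. F c)) = (\<Sum>c<C. u (yc c) * F c)"
proof -
  have "(\<Sum>y\<in>UNIV. u y * (\<Sum>c\<in>{c. c < C \<and> yc c = y}. F c))
      = (\<Sum>y\<in>UNIV. \<Sum>c\<in>{c\<in>{..<C}. yc c = y}. u (yc c) * F c)"
    by (simp add: sum_distrib_left)
  also have "\<dots> = (\<Sum>c<C. u (yc c) * F c)"
    by (rule sum.group) auto
  finally show ?thesis .
qed

lemma sum_weights_eq_sum_groups:
  fixes G :: "nat \<Rightarrow> real" and D :: "nat \<Rightarrow> nat \<Rightarrow> real"
  assumes Ic: "\<forall>c<C. Ic c \<subseteq> {..<K}"
  shows "(\<Sum>k<K. G k * (\<Sum>c<C. if yc c = y \<and> k \<in> Ic c then D c k else 0))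
       = (\<Sum>c\<in>{c. c < C \<and> yc c = y}. \<Sum>k\<in>Ic c. G k * D c k)"
proof -
  have "(\<Sum>k<K. G k * (\<Sum>c<C. if yc c = y \<and> k \<in> Ic c then D c k else 0))
      = (\<Sum>c<C. \<Sum>k<K. if yc c = y \<and> k \<in> Ic c then G k * D c k else 0)"
    by (simp add: sum_distrib_left if_distrib sum.swap[of _ "{..<C}"] cong: if_cong)
  also have "\<dots> = (\<Sum>c<C. if yc c = y then \<Sum>k\<in>Ic c. G k * D c k else 0)"
  proof (intro sum.cong refl)
    fix c assume "c \<in> {..<C}"
    then have "{..<K} \<inter> Ic c = Ic c" using Ic by auto
    then show "(\<Sum>k<K. if yc c = y \<and> k \<in> Ic c then G k * D c k else 0)
        = (if yc c = y then \<Sum>k\<in>Ic c. G k * D c k else 0)"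
      by (simp add: sum.inter_restrict[symmetric])
  qed
  also have "\<dots> = (\<Sum>c\<in>{c. c < C \<and> yc c = y}. \<Sum>k\<in>Ic c. G k * D c k)"
    by (simp add: sum.If_cases Int_def conj_commute)
  finally show ?thesis .
qed

locale fairness_setting =
  fixes M :: "'a measure" and N :: "'x measure" and X :: "'a \<Rightarrow> 'x"
    and Z :: "'a \<Rightarrow> nat \<Rightarrow> bool" and K :: nat
    and r :: "'x \<Rightarrow> 'y::{finite,linorder} \<Rightarrow> real" and g :: "'x \<Rightarrow> nat \<Rightarrow> real"
    and C :: nat and yc :: "nat \<Rightarrow> 'y" and Ic :: "nat \<Rightarrow> nat set"
  assumes M: "prob_space M"
    and X[measurable]: "X \<in> measurable M N"
    and Z_ev: "\<forall>k<K. {\<omega>\<in>space M. Z \<omega> k} \<in> sets M"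
    and r_nonneg: "\<forall>x y. r x y \<ge> 0"
    and r_meas: "\<forall>y. (\<lambda>x. r x y) \<in> borel_measurable N"
    and g: "cond_prob_version M N X Z K g"
    and Ic: "\<forall>c<C. Ic c \<subseteq> {..<K}"
begin

abbreviation P :: "'x measure" where "P \<equiv> distr M N X"

definition group_prob :: "nat \<Rightarrow> real" where
  "group_prob k = measure M {\<omega>\<in>space M. Z \<omega> k}"

definition dual_shift :: "(nat \<Rightarrow> nat \<Rightarrow> real) \<Rightarrow> 'x \<Rightarrow> 'y \<Rightarrow> real" where
  "dual_shift D x y = (\<Sum>c\<in>{c. c < C \<and> yc c = y}. \<Sum>k\<in>Ic c. g x k * D c k / group_prob k)"

definition reduced_risk :: "(nat \<Rightarrow> nat \<Rightarrow> real) \<Rightarrow> 'x \<Rightarrow> 'y \<Rightarrow> real" where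
  "reduced_risk D x y = r x y - dual_shift D x y"

definition min_reduced_risk :: "(nat \<Rightarrow> nat \<Rightarrow> real) \<Rightarrow> 'x \<Rightarrow> real" where
  "min_reduced_risk D x = Min (range (reduced_risk D x))"

definition dual_penalty :: "(nat \<Rightarrow> nat \<Rightarrow> real) \<Rightarrow> real" where
  "dual_penalty D = (\<Sum>c<C. \<Sum>k\<in>Ic c. \<bar>D c k\<bar>)"

lemma prob_space_P: "prob_space P"
  by (rule prob_space.prob_space_distr[OF M X])

lemma r_measurable[measurable]: "(\<lambda>x. r x y) \<in> borel_measurable N"
  using r_meas by auto

lemma Ic_less: "c < C \<Longrightarrow> k \<in> Ic c \<Longrightarrow> k < K"
  using Ic by auto

lemma finite_Ic: "c < C \<Longrightarrow> finite (Ic c)"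
  using Ic finite_subset by blast

lemma g_measurable: "k < K \<Longrightarrow> (\<lambda>x. g x k) \<in> borel_measurable N"
  and g_integrable: "k < K \<Longrightarrow> integrable P (\<lambda>x. g x k)"
  using g unfolding cond_prob_version_def by auto

lemma integral_mult_g:
  assumes "k < K" and "f \<in> borel_measurable N"
  shows "(\<integral>x. f x * g x k \<partial>P) = (\<integral>\<omega>. f (X \<omega>) * indicator {\<omega>\<in>space M. Z \<omega> k} \<omega> \<partial>M)"
  using integral_mult_cond_prob_version[OF M X _ g] Z_ev assms by blast

lemma integral_g_eq_group_prob: "k < K \<Longrightarrow> (\<integral>x. g x k \<partial>P) = group_prob k"
  using integral_mult_g[of k "\<lambda>_. 1"] Z_ev by (simp add: group_prob_def)

lemma cond_pred_prob_eq:
  assumes k: "k < K" and H: "randomized_classifier N H"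
  shows "cond_pred_prob M X Z H y k = (\<integral>x. pmf (H x) y * g x k \<partial>P) / group_prob k"
  using integral_mult_g[OF k, of "\<lambda>x. pmf (H x) y"] H
  unfolding cond_pred_prob_def group_prob_def randomized_classifier_def by simp

lemma integrable_pmf_mult_g:
  assumes "k < K" and "randomized_classifier N H"
  shows "integrable P (\<lambda>x. pmf (H x) y * g x k)"
  using assms g_measurable[of k] unfolding randomized_classifier_def
  by (intro Bochner_Integration.integrable_bound[OF g_integrable[OF assms(1)]])
     (auto intro!: AE_I2 borel_measurable_times simp: abs_mult pmf_le_1 mult_left_le_one_le)

lemma integrable_dual_shift: "integrable P (\<lambda>x. dual_shift D x y)"
  unfolding dual_shift_def using g_integrable Ic_less by auto

lemma dual_shift_measurable[measurable]: "(\<lambda>x. dual_shift D x y) \<in> borel_measurable N"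
  using borel_measurable_integrable[OF integrable_dual_shift] by simp

lemma reduced_risk_measurable[measurable]: "(\<lambda>x. reduced_risk D x y) \<in> borel_measurable N"
  unfolding reduced_risk_def by measurable

lemma min_reduced_risk_measurable[measurable]: "min_reduced_risk D \<in> borel_measurable N"
  unfolding min_reduced_risk_def by (rule borel_measurable_Min) auto

lemma min_reduced_risk_le: "min_reduced_risk D x \<le> reduced_risk D x y"
  unfolding min_reduced_risk_def by simp

lemma le_min_reduced_risk_iff: "a \<le> min_reduced_risk D x \<longleftrightarrow> (\<forall>y. a \<le> reduced_risk D x y)"
  unfolding min_reduced_risk_def by simp

lemma dual_shift_perturb:
  "dual_shift (\<lambda>c k. E c k + t * D c k) x y = dual_shift E x y + t * dual_shift D x y"
  unfolding dual_shift_def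
  by (simp add: sum.distrib sum_distrib_left algebra_simps add_divide_distrib)

lemma reduced_risk_perturb:
  "reduced_risk (\<lambda>c k. E c k + t * D c k) x y = reduced_risk E x y - t * dual_shift D x y"
  unfolding reduced_risk_def dual_shift_perturb by simp

lemma abs_min_reduced_risk_perturb_le:
  "\<bar>min_reduced_risk (\<lambda>c k. E c k + t * D c k) x - min_reduced_risk E x\<bar>
     \<le> \<bar>t\<bar> * (\<Sum>y\<in>UNIV. \<bar>dual_shift D x y\<bar>)"
  using abs_Min_range_diff_le[of "reduced_risk (\<lambda>c k. E c k + t * D c k) x" "reduced_risk E x"]
  unfolding min_reduced_risk_def reduced_risk_perturb by (simp add: abs_mult sum_distrib_left)

lemma fair_weights_objective:
  "r x y + (\<Sum>k<K. g x k * fair_weights M Z C yc Ic D y k) = reduced_risk D x y"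
proof -
  have "(\<Sum>k<K. g x k * fair_weights M Z C yc Ic D y k)
      = - (\<Sum>k<K. g x k * (\<Sum>c<C. if yc c = y \<and> k \<in> Ic c then D c k / group_prob k else 0))"
    unfolding fair_weights_def group_prob_def by (simp add: sum_negf)
  also have "\<dots> = - dual_shift D x y"
    unfolding sum_weights_eq_sum_groups[OF Ic] dual_shift_def by simp
  finally show ?thesis unfolding reduced_risk_def by simp
qed

lemma dual_feasible_iff:
  "dual_feasible P r g C yc Ic f D \<longleftrightarrow>
     f \<in> borel_measurable N \<and> integrable P f \<and> (\<forall>x\<in>space N. f x \<le> min_reduced_risk D x) \<and>
     (\<forall>c<C. (\<Sum>k\<in>Ic c. D c k) = 0)"
proof -
  have "(\<Sum>c\<in>{c. c < C \<and> yc c = y}. \<Sum>k\<in>Ic c. g x k * D c k / (\<integral>x'. g x' k \<partial>P))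
      = dual_shift D x y" for x y
    unfolding dual_shift_def using Ic_less
    by (intro sum.cong refl) (auto simp: integral_g_eq_group_prob)
  then show ?thesis
    unfolding dual_feasible_def le_min_reduced_risk_iff reduced_risk_def
    by (simp add: algebra_simps)
qed

lemma integrable_expected_dual_shift:
  assumes H: "randomized_classifier N H"
  shows "integrable P (\<lambda>x. \<Sum>y\<in>UNIV. pmf (H x) y * dual_shift D x y)"
proof (intro Bochner_Integration.integrable_sum)
  fix y
  have "(\<lambda>x. pmf (H x) y) \<in> borel_measurable N"
    using H unfolding randomized_classifier_def by auto
  then show "integrable P (\<lambda>x. pmf (H x) y * dual_shift D x y)"
    by (intro Bochner_Integration.integrable_bound[OF integrable_dual_shift[of D y]])
       (auto intro!: AE_I2 simp: abs_mult pmf_le_1 mult_left_le_one_le)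
qed

lemma integral_expected_dual_shift:
  assumes H: "randomized_classifier N H"
  shows "(\<integral>x. (\<Sum>y\<in>UNIV. pmf (H x) y * dual_shift D x y) \<partial>P)
       = (\<Sum>c<C. \<Sum>k\<in>Ic c. D c k * cond_pred_prob M X Z H (yc c) k)"
proof -
  have "(\<integral>x. (\<Sum>y\<in>UNIV. pmf (H x) y * dual_shift D x y) \<partial>P)
      = (\<integral>x. (\<Sum>c<C. \<Sum>k\<in>Ic c. D c k / group_prob k * (pmf (H x) (yc c) * g x k)) \<partial>P)"
    unfolding dual_shift_def sum_mult_sum_fibre
    by (intro Bochner_Integration.integral_cong refl sum.cong)
       (auto simp: sum_distrib_left mult_ac)
  also have "\<dots> = (\<Sum>c<C. \<Sum>k\<in>Ic c. D c k / group_prob k * (\<integral>x. pmf (H x) (yc c) * g x k \<partial>P))"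
    using integrable_pmf_mult_g[OF _ H] Ic_less by (simp add: integrable_sum)
  also have "\<dots> = (\<Sum>c<C. \<Sum>k\<in>Ic c. D c k * cond_pred_prob M X Z H (yc c) k)"
    using cond_pred_prob_eq[OF _ H] Ic_less by (intro sum.cong refl) simp
  finally show ?thesis .
qed

lemma integrable_min_reduced_risk_perturb_diff:
  "integrable P (\<lambda>x. min_reduced_risk (\<lambda>c k. E c k + t * D c k) x - min_reduced_risk E x)"
  by (rule Bochner_Integration.integrable_bound[of _ "\<lambda>x. \<bar>t\<bar> * (\<Sum>y\<in>UNIV. \<bar>dual_shift D x y\<bar>)"])
     (auto intro!: AE_I2 integrable_dual_shift abs_min_reduced_risk_perturb_le)

lemma dual_penalty_perturb_le:
  "0 \<le> t \<Longrightarrow> dual_penalty (\<lambda>c k. E c k + t * D c k) \<le> dual_penalty E + t * dual_penalty D"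
  unfolding dual_penalty_def sum_distrib_left sum.distrib[symmetric]
  by (intro sum_mono) (auto simp: abs_mult intro: order_trans[OF abs_triangle_ineq])

definition pair_direction :: "nat \<Rightarrow> nat \<Rightarrow> nat \<Rightarrow> nat \<Rightarrow> nat \<Rightarrow> real" where
  "pair_direction c k k' c' j = (if c' = c then indicator {k'} j - indicator {k} j else 0)"

lemma sum_pair_direction_mult:
  assumes "c < C" "k \<in> Ic c" "k' \<in> Ic c"
  shows "(\<Sum>c'<C. \<Sum>j\<in>Ic c'. pair_direction c k k' c' j * F c' j) = F c k' - F c k"
proof -
  have "(\<Sum>j\<in>Ic c'. pair_direction c k k' c' j * F c' j) = (if c' = c then F c k' - F c k else 0)"
    for c'
    using finite_Ic[OF assms(1)] assms(2,3)
    by (cases "c' = c")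
       (simp_all add: pair_direction_def left_diff_distrib sum_subtractf indicator_def sum.delta'
          if_distrib cong: if_cong)
  then show ?thesis using assms(1) by simp
qed

lemma sum_pair_direction:
  assumes "c < C" "k \<in> Ic c" "k' \<in> Ic c"
  shows "(\<Sum>j\<in>Ic c'. pair_direction c k k' c' j) = 0"
  using finite_Ic[OF assms(1)] assms(2,3)
  by (cases "c' = c") (simp_all add: pair_direction_def sum_subtractf indicator_def)

lemma dual_penalty_pair_direction:
  assumes "c < C" "k \<in> Ic c" "k' \<in> Ic c" "k \<noteq> k'"
  shows "dual_penalty (pair_direction c k k') = 2"
proof -
  \<comment> \<open>the entries lie in \<open>{-1, 0, 1}\<close>, so \<open>|d| = d * d\<close>\<close>
  have "dual_penalty (pair_direction c k k')
      = (\<Sum>c'<C. \<Sum>j\<in>Ic c'. pair_direction c k k' c' j * pair_direction c k k' c' j)"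
    unfolding dual_penalty_def
    by (intro sum.cong refl) (auto simp: pair_direction_def indicator_def)
  also have "\<dots> = 2"
    unfolding sum_pair_direction_mult[OF assms(1-3)] using assms(4)
    by (simp add: pair_direction_def)
  finally show ?thesis .
qed

end

locale fair_dual_optimum = fairness_setting +
  fixes \<alpha> :: real and \<phi> and \<psi> :: "nat \<Rightarrow> nat \<Rightarrow> real"
  assumes \<alpha>_nonneg: "0 \<le> \<alpha>"
    and uniq: "uniqueness_assumption P r g K"
    and opt: "dual_maximizer P r g C yc Ic \<alpha> \<phi> \<psi>"
begin

definition h where
  "h = plugin_classifier r g K (fair_weights M Z C yc Ic \<psi>)"

lemma h_eq_Least: "h x = (LEAST y. \<forall>y'. reduced_risk \<psi> x y \<le> reduced_risk \<psi> x y')"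
  unfolding h_def plugin_classifier_def fair_weights_objective ..

lemma h_measurable[measurable]: "h \<in> measurable N (count_space UNIV)"
  unfolding h_eq_Least[abs_def] by (intro measurable_Least_finite) measurable

lemma randomized_classifier_h: "randomized_classifier N (\<lambda>x. return_pmf (h x))"
  unfolding randomized_classifier_def pmf_return by measurable

lemma reduced_risk_h: "reduced_risk \<psi> x (h x) = min_reduced_risk \<psi> x"
  unfolding h_eq_Least min_reduced_risk_def
  by (intro Min_eqI[symmetric]) (auto intro: Least_minimizer_le)

lemma h_unique_minimizer:
  "AE x in P. \<forall>y. y \<noteq> h x \<longrightarrow> reduced_risk \<psi> x (h x) < reduced_risk \<psi> x y"
proof -
  have eq: "r x y - (\<Sum>k<K. g x k * - fair_weights M Z C yc Ic \<psi> y k) = reduced_risk \<psi> x y" for x y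
    using fair_weights_objective[of x y \<psi>] by (simp add: sum_negf)
  have "AE x in P. card {y. \<forall>y'. reduced_risk \<psi> x y \<le> reduced_risk \<psi> x y'} = 1"
    using uniq[unfolded uniqueness_assumption_def, rule_format,
        of "\<lambda>y k. - fair_weights M Z C yc Ic \<psi> y k"]
    by (simp only: eq)
  then show ?thesis
    by eventually_elim (auto simp: h_eq_Least intro: Least_minimizer_less)
qed

lemma \<phi>_measurable[measurable]: "\<phi> \<in> borel_measurable N"
  and \<phi>_integrable: "integrable P \<phi>"
  and \<phi>_le: "x \<in> space N \<Longrightarrow> \<phi> x \<le> min_reduced_risk \<psi> x"
  and \<psi>_row_sums: "\<forall>c<C. (\<Sum>k\<in>Ic c. \<psi> c k) = 0"
  using opt unfolding dual_maximizer_def dual_feasible_iff by auto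

lemma dual_objective_le:
  "dual_feasible P r g C yc Ic f D \<Longrightarrow>
     (\<integral>x. f x \<partial>P) - \<alpha> / 2 * dual_penalty D \<le> (\<integral>x. \<phi> x \<partial>P) - \<alpha> / 2 * dual_penalty \<psi>"
  using opt unfolding dual_maximizer_def dual_objective_def dual_penalty_def by auto

lemma \<phi>_eq_min_reduced_risk: "AE x in P. \<phi> x = min_reduced_risk \<psi> x"
proof -
  interpret P: prob_space P by (rule prob_space_P)
  \<comment> \<open>truncated at 1 because \<open>min_reduced_risk \<psi>\<close> itself need not be integrable\<close>
  define d where "d x = min (min_reduced_risk \<psi> x - \<phi> x) 1" for x
  have d_nonneg: "x \<in> space N \<Longrightarrow> 0 \<le> d x" for x
    using \<phi>_le by (simp add: d_def)
  have d_measurable[measurable]: "d \<in> borel_measurable N"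
    unfolding d_def by measurable
  have d_bound: "x \<in> space N \<Longrightarrow> \<bar>d x\<bar> \<le> 1" for x
    using d_nonneg[of x] by (simp add: d_def)
  have d_integrable: "integrable P d"
    by (rule Bochner_Integration.integrable_bound[of _ "\<lambda>_. 1::real"])
       (auto intro!: AE_I2 d_bound)
  have "(\<lambda>x. \<phi> x + d x) \<in> borel_measurable N" by measurable
  moreover have "\<phi> x + d x \<le> min_reduced_risk \<psi> x" for x
    by (simp add: d_def)
  ultimately have "dual_feasible P r g C yc Ic (\<lambda>x. \<phi> x + d x) \<psi>"
    unfolding dual_feasible_iff
    using \<psi>_row_sums Bochner_Integration.integrable_add[OF \<phi>_integrable d_integrable]
    by blast
  from dual_objective_le[OF this] have "(\<integral>x. d x \<partial>P) \<le> 0"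
    using d_integrable \<phi>_integrable by simp
  moreover have d_AE_nonneg: "AE x in P. 0 \<le> d x"
    by (rule AE_I2) (simp add: d_nonneg)
  ultimately have "(\<integral>x. d x \<partial>P) = 0"
    using integral_nonneg_AE[OF d_AE_nonneg] by linarith
  then have "AE x in P. d x = 0"
    using integral_nonneg_eq_0_iff_AE[OF d_integrable d_AE_nonneg] by blast
  then show ?thesis
    by eventually_elim (simp add: d_def min_def split: if_splits)
qed

lemma integral_min_reduced_risk_perturb_le:
  assumes rows: "\<forall>c<C. (\<Sum>k\<in>Ic c. D c k) = 0"
  shows "(\<integral>x. min_reduced_risk (\<lambda>c k. \<psi> c k + t * D c k) x - min_reduced_risk \<psi> x \<partial>P)
       \<le> \<alpha> / 2 * (dual_penalty (\<lambda>c k. \<psi> c k + t * D c k) - dual_penalty \<psi>)"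
proof -
  let ?\<psi>t = "\<lambda>c k. \<psi> c k + t * D c k"
  let ?\<Delta> = "\<lambda>x. min_reduced_risk ?\<psi>t x - min_reduced_risk \<psi> x"
  have "dual_feasible P r g C yc Ic (\<lambda>x. \<phi> x + ?\<Delta> x) ?\<psi>t"
    unfolding dual_feasible_iff
  proof (intro conjI ballI allI impI)
    show "(\<lambda>x. \<phi> x + ?\<Delta> x) \<in> borel_measurable N" by measurable
    show "integrable P (\<lambda>x. \<phi> x + ?\<Delta> x)"
      by (rule Bochner_Integration.integrable_add
          [OF \<phi>_integrable integrable_min_reduced_risk_perturb_diff])
    show "\<phi> x + ?\<Delta> x \<le> min_reduced_risk ?\<psi>t x" if "x \<in> space N" for x
      using \<phi>_le[OF that] by simp
    show "(\<Sum>k\<in>Ic c. ?\<psi>t c k) = 0" if "c < C" for c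
      using rows \<psi>_row_sums that by (simp add: sum.distrib sum_distrib_left[symmetric])
  qed
  from dual_objective_le[OF this]
  have "(\<integral>x. \<phi> x + ?\<Delta> x \<partial>P) - \<alpha> / 2 * dual_penalty ?\<psi>t
      \<le> (\<integral>x. \<phi> x \<partial>P) - \<alpha> / 2 * dual_penalty \<psi>" .
  moreover have "(\<integral>x. \<phi> x + ?\<Delta> x \<partial>P) = (\<integral>x. \<phi> x \<partial>P) + (\<integral>x. ?\<Delta> x \<partial>P)"
    by (rule Bochner_Integration.integral_add
        [OF \<phi>_integrable integrable_min_reduced_risk_perturb_diff])
  ultimately show ?thesis
    unfolding right_diff_distrib by linarith
qed

lemma min_reduced_risk_perturb_eventually:
  assumes "\<forall>y. y \<noteq> h x \<longrightarrow> reduced_risk \<psi> x (h x) < reduced_risk \<psi> x y" and "(t \<longlongrightarrow> 0) F"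
  shows "eventually (\<lambda>i. min_reduced_risk (\<lambda>c k. \<psi> c k + t i * D c k) x
                        = min_reduced_risk \<psi> x - t i * dual_shift D x (h x)) F"
  using Min_range_perturb_eventually[of "h x" "reduced_risk \<psi> x" t F "dual_shift D x"] assms
  unfolding min_reduced_risk_def reduced_risk_perturb
    reduced_risk_h[symmetric, unfolded min_reduced_risk_def]
  by auto

lemma directional_optimality:
  assumes rows: "\<forall>c<C. (\<Sum>k\<in>Ic c. D c k) = 0"
    and penalty: "\<And>t. 0 < t \<Longrightarrow> t < 1 \<Longrightarrow>
      dual_penalty (\<lambda>c k. \<psi> c k + t * D c k) \<le> dual_penalty \<psi> + t * \<beta>"
  shows "- (\<integral>x. dual_shift D x (h x) \<partial>P) \<le> \<alpha> / 2 * \<beta>"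
proof -
  define t :: "nat \<Rightarrow> real" where "t n = 1 / (real n + 2)" for n
  have t_pos: "0 < t n" and t_less_1: "t n < 1" for n
    unfolding t_def by (auto simp: field_simps)
  have t_lim: "t \<longlonglongrightarrow> 0"
    unfolding t_def by real_asymp
  define q where
    "q n x = (min_reduced_risk (\<lambda>c k. \<psi> c k + t n * D c k) x - min_reduced_risk \<psi> x) / t n"
    for n x
  define B where "B x = (\<Sum>y\<in>UNIV. \<bar>dual_shift D x y\<bar>)" for x
  have B_integrable: "integrable P B"
    unfolding B_def
    by (intro Bochner_Integration.integrable_sum integrable_abs integrable_dual_shift)
  have q_measurable[measurable]: "q n \<in> borel_measurable N" for n
    unfolding q_def by measurable
  have q_bound: "\<bar>q n x\<bar> \<le> B x" for n x
    using abs_min_reduced_risk_perturb_le[of \<psi> "t n" D x] t_pos[of n]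
    by (simp add: q_def B_def abs_divide divide_le_eq mult.commute)
  have q_integral_le: "(\<integral>x. q n x \<partial>P) \<le> \<alpha> / 2 * \<beta>" for n
  proof -
    have "(\<integral>x. min_reduced_risk (\<lambda>c k. \<psi> c k + t n * D c k) x - min_reduced_risk \<psi> x \<partial>P)
        \<le> \<alpha> / 2 * (dual_penalty (\<lambda>c k. \<psi> c k + t n * D c k) - dual_penalty \<psi>)"
      by (rule integral_min_reduced_risk_perturb_le[OF rows])
    also have "\<dots> \<le> \<alpha> / 2 * (t n * \<beta>)"
      using penalty[OF t_pos t_less_1, of n] \<alpha>_nonneg by (intro mult_left_mono) auto
    finally show ?thesis
      using t_pos[of n] by (simp add: q_def pos_divide_le_eq mult_ac)
  qed
  have "AE x in P. (\<lambda>n. q n x) \<longlonglongrightarrow> - dual_shift D x (h x)"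
    using h_unique_minimizer
  proof eventually_elim
    case (elim x)
    have "eventually (\<lambda>n. q n x = - dual_shift D x (h x)) sequentially"
      using min_reduced_risk_perturb_eventually[OF elim t_lim, of D]
      by eventually_elim (simp add: q_def less_imp_neq[OF t_pos, symmetric])
    then show ?case by (rule tendsto_eventually)
  qed
  then have "(\<lambda>n. \<integral>x. q n x \<partial>P) \<longlonglongrightarrow> (\<integral>x. - dual_shift D x (h x) \<partial>P)"
    by (intro integral_dominated_convergence[where w = B])
       (auto intro!: AE_I2 q_bound B_integrable)
  then have "(\<integral>x. - dual_shift D x (h x) \<partial>P) \<le> \<alpha> / 2 * \<beta>"
    by (rule LIMSEQ_le_const2) (intro exI allI impI q_integral_le)
  then show ?thesis by simp
qed

lemma integral_dual_shift_h:
  "(\<integral>x. dual_shift D x (h x) \<partial>P)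
     = (\<Sum>c<C. \<Sum>k\<in>Ic c. D c k * cond_pred_prob M X Z (\<lambda>x. return_pmf (h x)) (yc c) k)"
  using integral_expected_dual_shift[OF randomized_classifier_h, of D]
  by (simp add: sum_pmf_return_mult)

lemma cond_pred_prob_h_diff_le:
  assumes c: "c < C" and k: "k \<in> Ic c" and k': "k' \<in> Ic c"
  shows "cond_pred_prob M X Z (\<lambda>x. return_pmf (h x)) (yc c) k
       - cond_pred_prob M X Z (\<lambda>x. return_pmf (h x)) (yc c) k' \<le> \<alpha>"
proof (cases "k = k'")
  case True
  then show ?thesis using \<alpha>_nonneg by simp
next
  case False
  let ?D = "pair_direction c k k'"
  have rows: "\<forall>c'<C. (\<Sum>j\<in>Ic c'. ?D c' j) = 0"
    using sum_pair_direction[OF c k k'] by blast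
  have "- (\<integral>x. dual_shift ?D x (h x) \<partial>P) \<le> \<alpha> / 2 * 2"
  proof (rule directional_optimality[OF rows])
    fix t :: real assume "0 < t"
    then show "dual_penalty (\<lambda>c k. \<psi> c k + t * ?D c k) \<le> dual_penalty \<psi> + t * 2"
      using dual_penalty_perturb_le[of t \<psi> ?D] dual_penalty_pair_direction[OF c k k' False]
      by simp
  qed
  then show ?thesis
    unfolding integral_dual_shift_h sum_pair_direction_mult[OF c k k'] by simp
qed

lemma group_fair_h: "group_fair M X Z C yc Ic \<alpha> (\<lambda>x. return_pmf (h x))"
  unfolding group_fair_def abs_le_iff
  using cond_pred_prob_h_diff_le by fastforce

lemma complementary_slackness:
  "(\<Sum>c<C. \<Sum>k\<in>Ic c. \<psi> c k * cond_pred_prob M X Z (\<lambda>x. return_pmf (h x)) (yc c) k)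
     \<le> - (\<alpha> / 2 * dual_penalty \<psi>)"
proof -
  have rows: "\<forall>c<C. (\<Sum>k\<in>Ic c. - \<psi> c k) = 0"
    using \<psi>_row_sums by (simp add: sum_negf)
  have "- (\<integral>x. dual_shift (\<lambda>c k. - \<psi> c k) x (h x) \<partial>P) \<le> \<alpha> / 2 * - dual_penalty \<psi>"
  proof (rule directional_optimality[OF rows])
    fix t :: real assume "0 < t" "t < 1"
    have "\<bar>\<psi> c k + t * - \<psi> c k\<bar> = (1 - t) * \<bar>\<psi> c k\<bar>" for c k
    proof -
      have "\<psi> c k + t * - \<psi> c k = (1 - t) * \<psi> c k" by (simp add: algebra_simps)
      then show ?thesis using \<open>t < 1\<close> by (simp add: abs_mult)
    qed
    then have "dual_penalty (\<lambda>c k. \<psi> c k + t * - \<psi> c k) = (1 - t) * dual_penalty \<psi>"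
      unfolding dual_penalty_def sum_distrib_left by simp
    then show "dual_penalty (\<lambda>c k. \<psi> c k + t * - \<psi> c k) \<le> dual_penalty \<psi> + t * - dual_penalty \<psi>"
      by (simp add: algebra_simps)
  qed
  then show ?thesis
    unfolding integral_dual_shift_h by (simp add: sum_negf)
qed

lemma risk_h_le_dual_value:
  "risk P r (\<lambda>x. return_pmf (h x)) \<le> ennreal ((\<integral>x. \<phi> x \<partial>P) - \<alpha> / 2 * dual_penalty \<psi>)"
proof -
  have shift_h_integrable: "integrable P (\<lambda>x. dual_shift \<psi> x (h x))"
    using integrable_expected_dual_shift[OF randomized_classifier_h, of \<psi>]
    by (simp add: sum_pmf_return_mult)
  have risk_h: "AE x in P. r x (h x) = \<phi> x + dual_shift \<psi> x (h x)"
    using \<phi>_eq_min_reduced_risk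
    by eventually_elim (simp add: reduced_risk_h[symmetric] reduced_risk_def)
  have "risk P r (\<lambda>x. return_pmf (h x)) = (\<integral>\<^sup>+x. ennreal (\<phi> x + dual_shift \<psi> x (h x)) \<partial>P)"
    unfolding risk_def sum_pmf_return_mult using risk_h
    by (intro nn_integral_cong_AE) (auto elim: eventually_mono)
  also have "\<dots> = ennreal (\<integral>x. \<phi> x + dual_shift \<psi> x (h x) \<partial>P)"
  proof (intro nn_integral_eq_integral
      Bochner_Integration.integrable_add[OF \<phi>_integrable shift_h_integrable])
    show "AE x in P. 0 \<le> \<phi> x + dual_shift \<psi> x (h x)"
      using risk_h by eventually_elim (metis r_nonneg)
  qed
  also have "(\<integral>x. \<phi> x + dual_shift \<psi> x (h x) \<partial>P)
      = (\<integral>x. \<phi> x \<partial>P)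
        + (\<Sum>c<C. \<Sum>k\<in>Ic c. \<psi> c k * cond_pred_prob M X Z (\<lambda>x. return_pmf (h x)) (yc c) k)"
    unfolding integral_dual_shift_h[symmetric]
    by (rule Bochner_Integration.integral_add[OF \<phi>_integrable shift_h_integrable])
  also have "ennreal \<dots> \<le> ennreal ((\<integral>x. \<phi> x \<partial>P) - \<alpha> / 2 * dual_penalty \<psi>)"
    using complementary_slackness by (intro ennreal_leI) simp
  finally show ?thesis .
qed

lemma neg_dual_penalty_le_fair:
  assumes "group_fair M X Z C yc Ic \<alpha> H"
  shows "- (\<alpha> / 2 * dual_penalty \<psi>) \<le> (\<Sum>c<C. \<Sum>k\<in>Ic c. \<psi> c k * cond_pred_prob M X Z H (yc c) k)"
proof -
  have "(\<Sum>c<C. - (\<alpha> / 2 * (\<Sum>k\<in>Ic c. \<bar>\<psi> c k\<bar>)))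
      \<le> (\<Sum>c<C. \<Sum>k\<in>Ic c. \<psi> c k * cond_pred_prob M X Z H (yc c) k)"
    using assms \<psi>_row_sums finite_Ic unfolding group_fair_def
    by (intro sum_mono zero_sum_weights_lower_bound) auto
  then show ?thesis
    unfolding dual_penalty_def by (simp add: sum_negf sum_distrib_left)
qed

lemma dual_value_le_risk:
  assumes H: "randomized_classifier N H" and fair: "group_fair M X Z C yc Ic \<alpha> H"
  shows "ennreal ((\<integral>x. \<phi> x \<partial>P) - \<alpha> / 2 * dual_penalty \<psi>) \<le> risk P r H"
proof -
  define F where "F x = \<phi> x + (\<Sum>y\<in>UNIV. pmf (H x) y * dual_shift \<psi> x y)" for x
  have F_integrable: "integrable P F"
    unfolding F_def
    by (rule Bochner_Integration.integrable_add
        [OF \<phi>_integrable integrable_expected_dual_shift[OF H]])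
  have "(\<integral>x. \<phi> x \<partial>P) - \<alpha> / 2 * dual_penalty \<psi> \<le> (\<integral>x. F x \<partial>P)"
    using neg_dual_penalty_le_fair[OF fair]
    unfolding F_def integral_expected_dual_shift[OF H, symmetric]
      Bochner_Integration.integral_add[OF \<phi>_integrable integrable_expected_dual_shift[OF H]]
    by simp
  then have "ennreal ((\<integral>x. \<phi> x \<partial>P) - \<alpha> / 2 * dual_penalty \<psi>) \<le> ennreal (\<integral>x. F x \<partial>P)"
    by (rule ennreal_leI)
  also have "\<dots> \<le> (\<integral>\<^sup>+x. ennreal (F x) \<partial>P)"
    by (rule ennreal_integral_le_nn_integral[OF F_integrable])
  also have "\<dots> \<le> risk P r H"
    unfolding risk_def
  proof (intro nn_integral_mono ennreal_leI)
    fix x assume x: "x \<in> space P"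
    have "\<phi> x + dual_shift \<psi> x y \<le> r x y" for y
      using \<phi>_le[of x] x min_reduced_risk_le[of \<psi> x y] unfolding reduced_risk_def by simp
    then have "(\<Sum>y\<in>UNIV. pmf (H x) y * (\<phi> x + dual_shift \<psi> x y)) \<le> (\<Sum>y\<in>UNIV. pmf (H x) y * r x y)"
      by (intro sum_mono mult_left_mono) simp_all
    then show "F x \<le> (\<Sum>y\<in>UNIV. pmf (H x) y * r x y)"
      using sum_pmf_eq_1[of UNIV "H x"]
      by (simp add: F_def distrib_left sum.distrib sum_distrib_right[symmetric])
  qed
  finally show ?thesis .
qed

end

theorem theorem1:
  fixes M :: "'a measure" and N :: "'x measure" and X :: "'a \<Rightarrow> 'x"
    and Z :: "'a \<Rightarrow> nat \<Rightarrow> bool" and K :: nat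
    and r :: "'x \<Rightarrow> 'y::{finite,linorder} \<Rightarrow> real" and g :: "'x \<Rightarrow> nat \<Rightarrow> real"
    and C :: nat and yc :: "nat \<Rightarrow> 'y" and Ic :: "nat \<Rightarrow> nat set" and \<alpha> :: real
    and \<phi> :: "'x \<Rightarrow> real" and \<psi> :: "nat \<Rightarrow> nat \<Rightarrow> real"
  assumes M: "prob_space M"
    and X: "X \<in> measurable M N"
    and Z_ev: "\<forall>k<K. {\<omega>\<in>space M. Z \<omega> k} \<in> sets M"
    and Z_pos: "\<forall>k<K. measure M {\<omega>\<in>space M. Z \<omega> k} > 0"
    and r_nonneg: "\<forall>x y. r x y \<ge> 0"
    and r_meas: "\<forall>y. (\<lambda>x. r x y) \<in> borel_measurable N"
    and g: "cond_prob_version M N X Z K g"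
    and Ic: "\<forall>c<C. Ic c \<subseteq> {..<K}"
    and \<alpha>: "0 \<le> \<alpha>" "\<alpha> \<le> 1"
    and uniq: "uniqueness_assumption (distr M N X) r g K"
    and opt: "dual_maximizer (distr M N X) r g C yc Ic \<alpha> \<phi> \<psi>"
  shows "let h = plugin_classifier r g K (fair_weights M Z C yc Ic \<psi>);
             H = (\<lambda>x. return_pmf (h x))
         in randomized_classifier N H \<and> group_fair M X Z C yc Ic \<alpha> H \<and>
            (\<forall>H'. randomized_classifier N H' \<and> group_fair M X Z C yc Ic \<alpha> H'
                   \<longrightarrow> risk (distr M N X) r H \<le> risk (distr M N X) r H')"
proof -
  interpret fair_dual_optimum M N X Z K r g C yc Ic \<alpha> \<phi> \<psi>
    by (intro fair_dual_optimum.intro fairness_setting.intro fair_dual_optimum_axioms.intro)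
       (fact M X Z_ev r_nonneg r_meas g Ic uniq opt \<alpha>(1))+
  show ?thesis
    unfolding Let_def h_def[symmetric]
    using randomized_classifier_h group_fair_h risk_h_le_dual_value dual_value_le_risk
    by (blast intro: order_trans)
qed

end
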